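(* Let $n\ge1$. Let $M'_n$ be the $2^{n-1}\times2^{n-1}$ matrix with rows and columns indexed by subsets of $\{1,\dots,n-1\}$ and $(M'_n)_{I,J}=a_{n,I,J}$, the number of simple $n$-braids $x$ with $D_L(x)=I$ and $D_R(x)\supseteq J$. Let $M_n$ be the $n!\times n!$ matrix with rows and columns indexed by the simple $n$-braids (same order for rows and columns) with $(M_n)_{x,y}=1$ if $(x,y)$ is normal and $0$ otherwise. Then the characteristic polynomials of $M'_n$ and $M_n$ coincide up to a factor that is a power of the variable, and for every simple $n$-braid $y$ with $D_L(y)=J$ and every $d\ge1$, $$b_{n,d}(y)=\big((1,1,\dots,1)\,M_n'^{\,d-1}\big)_J.$$
   Context: $B_n^+$ is the positive braid monoid with generators $\sigma_1,\dots,\sigma_{n-1}$ and relations $\sigma_i\sigma_j=\sigma_j\sigma_i$ ($|i-j|\ge2$), $\sigma_i\sigma_j\sigma_i=\sigma_j\sigma_i\sigma_j$ ($|i-j|=1$). $\Delta_1=1$, $\Delta_n=\sigma_1\cdots\sigma_{n-1}\Delta_{n-1}$. Simple $n$-braids are the left (equivalently right) divisors of $\Delta_n$ in $B_n^+$. For simple $x$, $D_L(x)$ (resp. $D_R(x)$) is the set of $i\in\{1,\dots,n-1\}$ with $\sigma_i$ a left (resp. right) divisor of $x$. A sequence $(x_1,\dots,x_d)$ of simple $n$-braids is normal if $x_k=\gcd(\Delta_n,x_k\cdots x_d)$ (greatest common left divisor) for each $k$; equivalently $D_R(x_k)\supseteq D_L(x_{k+1})$ for all $k<d$. For a simple $n$-braid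 $y$, $b_{n,d}(y)$ is the number of normal sequences $(x_1,\dots,x_{d-1},y)$. *)

theory Defs
  imports "Jordan_Normal_Form.Char_Poly"
begin

text \<open>Positive braid words on n strands: lists over the generator indices 1..n-1
  (the letter i stands for sigma_i).\<close>

definition braid_word :: "nat \<Rightarrow> nat list \<Rightarrow> bool" where
  "braid_word n w \<longleftrightarrow> set w \<subseteq> {1..<n}"

inductive braid_step :: "nat \<Rightarrow> nat list \<Rightarrow> nat list \<Rightarrow> bool" for n where
  comm: "\<lbrakk>i \<in> {1..<n}; j \<in> {1..<n}; i + 2 \<le> j \<or> j + 2 \<le> i\<rbrakk>
     \<Longrightarrow> braid_step n (a @ [i, j] @ b) (a @ [j, i] @ b)"
| braid: "\<lbrakk>i \<in> {1..<n}; j \<in> {1..<n}; i = j + 1 \<or> j = i + 1\<rbrakk>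
     \<Longrightarrow> braid_step n (a @ [i, j, i] @ b) (a @ [j, i, j] @ b)"

definition braid_eq :: "nat \<Rightarrow> nat list \<Rightarrow> nat list \<Rightarrow> bool" where
  "braid_eq n = equivclp (braid_step n)"

text \<open>The element of B_n^+ represented by a word (its equivalence class of words).\<close>
definition braid_of :: "nat \<Rightarrow> nat list \<Rightarrow> nat list set" where
  "braid_of n w = {v. braid_word n v \<and> braid_eq n w v}"

fun delta_word :: "nat \<Rightarrow> nat list" where
  "delta_word 0 = []"
| "delta_word (Suc n) = [1..<Suc n] @ delta_word n"

definition left_div :: "nat \<Rightarrow> nat list \<Rightarrow> nat list \<Rightarrow> bool" where
  "left_div n w z \<longleftrightarrow> (\<exists>u. braid_word n u \<and> braid_eq n (w @ u) z)"

definition simple_braids :: "nat \<Rightarrow> nat list set set" where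
  "simple_braids n = {braid_of n w | w. braid_word n w \<and> left_div n w (delta_word n)}"

definition D_L :: "nat \<Rightarrow> nat list set \<Rightarrow> nat set" where
  "D_L n x = {i \<in> {1..<n}. \<exists>w\<in>x. left_div n [i] w}"

definition D_R :: "nat \<Rightarrow> nat list set \<Rightarrow> nat set" where
  "D_R n x = {i \<in> {1..<n}. \<exists>w\<in>x. \<exists>u. braid_word n u \<and> braid_eq n (u @ [i]) w}"

text \<open>Normal sequences of simple braids (descent-set characterisation:
  D_R(x_k) contains D_L(x_(k+1))).\<close>
definition normal_seq :: "nat \<Rightarrow> nat list set list \<Rightarrow> bool" where
  "normal_seq n xs \<longleftrightarrow> set xs \<subseteq> simple_braids n \<and>
     (\<forall>k. Suc k < length xs \<longrightarrow> D_L n (xs ! Suc k) \<subseteq> D_R n (xs ! k))"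

definition b_count :: "nat \<Rightarrow> nat \<Rightarrow> nat list set \<Rightarrow> nat" where
  "b_count n d y = card {xs. length xs = d \<and> last xs = y \<and> normal_seq n xs}"

definition a_count :: "nat \<Rightarrow> nat set \<Rightarrow> nat set \<Rightarrow> nat" where
  "a_count n I J = card {x \<in> simple_braids n. D_L n x = I \<and> J \<subseteq> D_R n x}"

definition M'_mat :: "nat \<Rightarrow> (nat \<Rightarrow> nat set) \<Rightarrow> int mat" where
  "M'_mat n e = mat (2 ^ (n - 1)) (2 ^ (n - 1)) (\<lambda>(i, j). int (a_count n (e i) (e j)))"

definition M_mat :: "nat \<Rightarrow> (nat \<Rightarrow> nat list set) \<Rightarrow> int mat" where
  "M_mat n f = mat (fact n) (fact n)
     (\<lambda>(i, j). if normal_seq n [f i, f j] then 1 else 0)"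

end

(* Both matrices factor through the descent sets: with A(x, J) = [J \<subseteq> D_R x] and
   B(I, y) = [D_L y = I] one has M_n = A B and M'_n = B A, so Sylvester's determinant identity
   relates their characteristic polynomials.  For the count b_{n,d}, a normal sequence ending in
   y extends one ending in x exactly when D_L y \<subseteq> D_R x.  Grouping the possible x by D_L x
   shows by induction on d that b_{n,d}(y) depends only on D_L y and that the row vector of these
   counts, which is (1, ..., 1) for d = 1, gets multiplied by M'_n at each step. *)

theory Submission
  imports Defs
begin

lemma sylvester_det_identity:
  fixes P :: "'a::idom mat"
  assumes P: "P \<in> carrier_mat m k" and Q: "Q \<in> carrier_mat k m"
  shows "x ^ k * det (x \<cdot>\<^sub>m 1\<^sub>m m - P * Q) = x ^ m * det (x \<cdot>\<^sub>m 1\<^sub>m k - Q * P)"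
proof -
  \<comment> \<open>Reduce Z to block triangular form by left multiplication in two different ways.\<close>
  define Z where "Z = four_block_mat (x \<cdot>\<^sub>m 1\<^sub>m m) P Q (1\<^sub>m k)"
  define L1 where "L1 = four_block_mat (1\<^sub>m m) (-P) (0\<^sub>m k m) (1\<^sub>m k)"
  define L2 where "L2 = four_block_mat (1\<^sub>m m) (0\<^sub>m m k) (-Q) (x \<cdot>\<^sub>m 1\<^sub>m k)"
  have Z: "Z \<in> carrier_mat (m + k) (m + k)" and L1: "L1 \<in> carrier_mat (m + k) (m + k)"
    and L2: "L2 \<in> carrier_mat (m + k) (m + k)"
    unfolding Z_def L1_def L2_def using P Q by auto
  have L1Z: "L1 * Z = four_block_mat (x \<cdot>\<^sub>m 1\<^sub>m m - P * Q) (0\<^sub>m m k) Q (1\<^sub>m k)"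
    unfolding L1_def Z_def using P Q
    by (subst mult_four_block_mat[of _ m m _ k _ k _ _ m]) (auto intro!: cong_four_block_mat)
  have L2Z: "L2 * Z = four_block_mat (x \<cdot>\<^sub>m 1\<^sub>m m) P (0\<^sub>m k m) (x \<cdot>\<^sub>m 1\<^sub>m k - Q * P)"
    unfolding L2_def Z_def using P Q
    by (subst mult_four_block_mat[of _ m m _ k _ k _ _ m]) (auto intro!: cong_four_block_mat)
  have "det L1 = 1" unfolding L1_def
    by (subst det_four_block_mat_lower_left_zero[of _ m _ k]) (use P in auto)
  then have "det Z = det (L1 * Z)"
    using det_mult[OF L1 Z] by simp
  also have "\<dots> = det (x \<cdot>\<^sub>m 1\<^sub>m m - P * Q)"
    unfolding L1Z by (subst det_four_block_mat_upper_right_zero[of _ m _ k]) (use P Q in auto)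
  finally have "x ^ k * det Z = x ^ k * det (x \<cdot>\<^sub>m 1\<^sub>m m - P * Q)" by simp
  moreover have "det L2 = x ^ k" unfolding L2_def
    by (subst det_four_block_mat_upper_right_zero[of _ m _ k]) (use Q in auto)
  then have "x ^ k * det Z = det (L2 * Z)"
    using det_mult[OF L2 Z] by simp
  also have "\<dots> = x ^ m * det (x \<cdot>\<^sub>m 1\<^sub>m k - Q * P)"
    unfolding L2Z by (subst det_four_block_mat_lower_left_zero[of _ m _ k]) (use P Q in auto)
  ultimately show ?thesis by simp
qed

lemma char_poly_matrix_conv:
  assumes "A \<in> carrier_mat n n"
  shows "char_poly_matrix A = [:0, 1:] \<cdot>\<^sub>m 1\<^sub>m n - map_mat (\<lambda>a. [:a:]) A"
  unfolding char_poly_matrix_def using assms by (intro eq_matI) auto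

lemma char_poly_mult_swap:
  fixes A :: "'a::idom mat"
  assumes A: "A \<in> carrier_mat m k" and B: "B \<in> carrier_mat k m" and "k \<le> m"
  shows "char_poly (A * B) = [:0, 1:] ^ (m - k) * char_poly (B * A)"
proof -
  interpret const_poly: comm_ring_hom "\<lambda>a::'a. [:a:]"
    by unfold_locales (auto simp: one_pCons)
  let ?X = "[:0, 1::'a:]" and ?A = "map_mat (\<lambda>a. [:a:]) A" and ?B = "map_mat (\<lambda>a. [:a:]) B"
  have "?X ^ k * char_poly (A * B) = ?X ^ m * char_poly (B * A)"
    unfolding char_poly_def using A B
    by (simp add: char_poly_matrix_conv[of _ m] char_poly_matrix_conv[of _ k]
        const_poly.mat_hom_mult sylvester_det_identity)
  also have "?X ^ m = ?X ^ k * ?X ^ (m - k)"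
    using \<open>k \<le> m\<close> by (simp flip: power_add)
  finally show ?thesis by simp
qed

lemma index_mult_mat_sum:
  assumes "A \<in> carrier_mat nr n" "B \<in> carrier_mat n nc" "i < nr" "j < nc"
  shows "(A * B) $$ (i, j) = (\<Sum>l<n. A $$ (i, l) * B $$ (l, j))"
  using assms by (auto simp: scalar_prod_def lessThan_atLeast0 intro!: sum.cong)

lemma column_sum_mult_mat:
  fixes A :: "'a::comm_semiring_1 mat"
  assumes "A \<in> carrier_mat nr n" "B \<in> carrier_mat n nc" "j < nc"
  shows "(\<Sum>i<nr. (A * B) $$ (i, j)) = (\<Sum>l<n. (\<Sum>i<nr. A $$ (i, l)) * B $$ (l, j))"
proof -
  have "(\<Sum>i<nr. (A * B) $$ (i, j)) = (\<Sum>i<nr. \<Sum>l<n. A $$ (i, l) * B $$ (l, j))"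
    using assms by (intro sum.cong refl index_mult_mat_sum) auto
  then show ?thesis
    by (simp add: sum_distrib_right sum.swap[of _ "{..<nr}"])
qed

lemma two_power_pred_le_fact: "(2::nat) ^ (n - 1) \<le> fact n"
proof (induction n)
  case (Suc n)
  then show ?case
    by (cases n) (auto intro: mult_mono)
qed simp

definition descent_chain :: "'a set \<Rightarrow> ('a \<Rightarrow> 'b set) \<Rightarrow> ('a \<Rightarrow> 'b set) \<Rightarrow> 'a list \<Rightarrow> bool" where
  "descent_chain S L R xs \<longleftrightarrow> set xs \<subseteq> S \<and> successively (\<lambda>x y. L y \<subseteq> R x) xs"

definition descent_chains ::
    "'a set \<Rightarrow> ('a \<Rightarrow> 'b set) \<Rightarrow> ('a \<Rightarrow> 'b set) \<Rightarrow> nat \<Rightarrow> 'a \<Rightarrow> 'a list set" where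
  "descent_chains S L R d y = {xs. length xs = d \<and> last xs = y \<and> descent_chain S L R xs}"

lemma descent_chain_snoc:
  "descent_chain S L R (xs @ [y]) \<longleftrightarrow>
     descent_chain S L R xs \<and> y \<in> S \<and> (xs \<noteq> [] \<longrightarrow> L y \<subseteq> R (last xs))"
  by (auto simp: descent_chain_def successively_append_iff)

lemma finite_descent_chains:
  assumes "finite S"
  shows "finite (descent_chains S L R d y)"
  by (rule finite_subset[OF _ finite_lists_length_eq[OF assms, of d]])
    (auto simp: descent_chains_def descent_chain_def)

lemma descent_chains_one:
  assumes "y \<in> S"
  shows "descent_chains S L R (Suc 0) y = {[y]}"
  using assms by (auto simp: descent_chains_def descent_chain_def length_Suc_conv)

lemma descent_chains_Suc:
  assumes "y \<in> S"
  shows "descent_chains S L R (Suc (Suc d)) y =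
    (\<Union>x \<in> {x \<in> S. L y \<subseteq> R x}. (\<lambda>xs. xs @ [y]) ` descent_chains S L R (Suc d) x)"
proof (intro equalityI subsetI)
  fix xs assume xs: "xs \<in> descent_chains S L R (Suc (Suc d)) y"
  then obtain ys where xs_eq: "xs = ys @ [y]" and "length ys = Suc d"
    by (cases xs rule: rev_cases) (auto simp: descent_chains_def)
  then have "ys \<noteq> []" by auto
  from xs xs_eq \<open>length ys = Suc d\<close>
  have "ys \<in> descent_chains S L R (Suc d) (last ys)" "L y \<subseteq> R (last ys)"
    by (auto simp: descent_chains_def descent_chain_snoc)
  moreover from this(1) have "last ys \<in> S"
    using last_in_set[OF \<open>ys \<noteq> []\<close>] by (auto simp: descent_chains_def descent_chain_def)
  ultimately show "xs \<in> (\<Union>x \<in> {x \<in> S. L y \<subseteq> R x}.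
      (\<lambda>xs. xs @ [y]) ` descent_chains S L R (Suc d) x)"
    using xs_eq by blast
next
  fix xs
  assume "xs \<in> (\<Union>x \<in> {x \<in> S. L y \<subseteq> R x}. (\<lambda>xs. xs @ [y]) ` descent_chains S L R (Suc d) x)"
  then show "xs \<in> descent_chains S L R (Suc (Suc d)) y"
    using assms by (auto simp: descent_chain_snoc descent_chains_def)
qed

lemma card_descent_chains_Suc:
  assumes "finite S" "y \<in> S"
  shows "card (descent_chains S L R (Suc (Suc d)) y) =
    (\<Sum>x \<in> {x \<in> S. L y \<subseteq> R x}. card (descent_chains S L R (Suc d) x))"
proof -
  have "card (descent_chains S L R (Suc (Suc d)) y) =
      (\<Sum>x \<in> {x \<in> S. L y \<subseteq> R x}. card ((\<lambda>xs. xs @ [y]) ` descent_chains S L R (Suc d) x))"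
    unfolding descent_chains_Suc[OF assms(2)]
    by (rule card_UN_disjoint) (auto simp: assms(1) finite_descent_chains, auto simp: descent_chains_def)
  also have "\<dots> = (\<Sum>x \<in> {x \<in> S. L y \<subseteq> R x}. card (descent_chains S L R (Suc d) x))"
    by (intro sum.cong refl card_image) (auto simp: inj_on_def)
  finally show ?thesis .
qed

definition descent_type_matrix ::
    "'a set \<Rightarrow> ('a \<Rightarrow> 'b set) \<Rightarrow> ('a \<Rightarrow> 'b set) \<Rightarrow> (nat \<Rightarrow> 'b set) \<Rightarrow> nat \<Rightarrow> int mat" where
  "descent_type_matrix S L R e N = mat N N (\<lambda>(l, l'). int (card {x \<in> S. L x = e l \<and> e l' \<subseteq> R x}))"

lemma descent_type_matrix_carrier: "descent_type_matrix S L R e N \<in> carrier_mat N N"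
  by (simp add: descent_type_matrix_def)

lemma index_descent_type_matrix:
  "l < N \<Longrightarrow> l' < N \<Longrightarrow>
    descent_type_matrix S L R e N $$ (l, l') = int (card {x \<in> S. L x = e l \<and> e l' \<subseteq> R x})"
  by (simp add: descent_type_matrix_def)

lemma card_descent_chains_eq_column_sum:
  assumes S: "finite S" and e: "inj_on e {..<N}" "L ` S \<subseteq> e ` {..<N}"
    and y: "y \<in> S" and j: "j < N" "e j = L y"
  shows "int (card (descent_chains S L R (Suc d) y)) =
    (\<Sum>i<N. (descent_type_matrix S L R e N ^\<^sub>m d) $$ (i, j))"
  using y j
proof (induction d arbitrary: y j)
  case 0
  then show ?case
    by (simp add: descent_chains_one descent_type_matrix_def)
next
  case (Suc d)
  let ?P = "descent_type_matrix S L R e N" and ?S' = "{x \<in> S. L y \<subseteq> R x}"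
  define idx where "idx x = inv_into {..<N} e (L x)" for x
  have idx: "idx x < N" "e (idx x) = L x" if "x \<in> S" for x
    using that e(2) inv_into_into[of "L x" e "{..<N}"] f_inv_into_f[of "L x" e "{..<N}"]
    by (auto simp: idx_def)
  have "int (card (descent_chains S L R (Suc (Suc d)) y)) =
      (\<Sum>x\<in>?S'. int (card (descent_chains S L R (Suc d) x)))"
    using S Suc.prems(1) by (simp add: card_descent_chains_Suc)
  also have "\<dots> = (\<Sum>x\<in>?S'. (\<Sum>i<N. (?P ^\<^sub>m d) $$ (i, idx x)))"
    using idx by (intro sum.cong refl Suc.IH) auto
  also have "\<dots> = (\<Sum>l<N. of_nat (card {x \<in> ?S'. idx x = l}) * (\<Sum>i<N. (?P ^\<^sub>m d) $$ (i, l)))"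
    using S idx by (intro sum_fun_comp) auto
  also have "\<dots> = (\<Sum>l<N. (\<Sum>i<N. (?P ^\<^sub>m d) $$ (i, l)) * ?P $$ (l, j))"
  proof (intro sum.cong refl)
    fix l assume "l \<in> {..<N}"
    then have "{x \<in> ?S'. idx x = l} = {x \<in> S. L x = e l \<and> e j \<subseteq> R x}"
      using idx e(1) Suc.prems by (auto simp: inj_on_def)
    then show "of_nat (card {x \<in> ?S'. idx x = l}) * (\<Sum>i<N. (?P ^\<^sub>m d) $$ (i, l)) =
        (\<Sum>i<N. (?P ^\<^sub>m d) $$ (i, l)) * ?P $$ (l, j)"
      using \<open>l \<in> {..<N}\<close> Suc.prems by (simp add: index_descent_type_matrix)
  qed
  also have "\<dots> = (\<Sum>i<N. (?P ^\<^sub>m d * ?P) $$ (i, j))"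
  proof -
    have P: "?P \<in> carrier_mat N N" by (rule descent_type_matrix_carrier)
    show ?thesis
      using column_sum_mult_mat[OF pow_carrier_mat[OF P] P Suc.prems(2)] by simp
  qed
  also have "\<dots> = (\<Sum>i<N. (?P ^\<^sub>m Suc d) $$ (i, j))"
    by simp
  finally show ?case .
qed

definition descent_transition_matrix ::
    "(nat \<Rightarrow> 'a) \<Rightarrow> nat \<Rightarrow> ('a \<Rightarrow> 'b set) \<Rightarrow> ('a \<Rightarrow> 'b set) \<Rightarrow> int mat" where
  "descent_transition_matrix f F L R = mat F F (\<lambda>(i, j). of_bool (L (f j) \<subseteq> R (f i)))"

lemma descent_matrices_factorization:
  fixes f :: "nat \<Rightarrow> 'a" and L R :: "'a \<Rightarrow> 'b set" and e :: "nat \<Rightarrow> 'b set"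
  assumes f: "bij_betw f {..<F} S" and e: "inj_on e {..<N}" "L ` S \<subseteq> e ` {..<N}"
  defines "A \<equiv> mat F N (\<lambda>(i, l). of_bool (e l \<subseteq> R (f i))) :: int mat"
    and "B \<equiv> mat N F (\<lambda>(l, j). of_bool (L (f j) = e l)) :: int mat"
  shows "descent_transition_matrix f F L R = A * B"
    and "descent_type_matrix S L R e N = B * A"
proof -
  have A: "A \<in> carrier_mat F N" and B: "B \<in> carrier_mat N F"
    by (simp_all add: A_def B_def)
  show "descent_transition_matrix f F L R = A * B"
  proof (rule eq_matI)
    fix i j assume "i < dim_row (A * B)" "j < dim_col (A * B)"
    then have ij: "i < F" "j < F" using A B by auto
    then have "f j \<in> S"
      using bij_betwE[OF f] by blast
    then have "L (f j) \<in> e ` {..<N}"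
      using e(2) by blast
    then obtain l0 where l0: "l0 < N" "e l0 = L (f j)"
      by (metis imageE lessThan_iff)
    have "(A * B) $$ (i, j) = (\<Sum>l<N. A $$ (i, l) * B $$ (l, j))"
      using A B ij by (rule index_mult_mat_sum)
    also have "\<dots> = (\<Sum>l<N. if l = l0 then of_bool (L (f j) \<subseteq> R (f i)) else 0)"
      using ij l0 e(1) by (intro sum.cong refl) (auto simp: A_def B_def inj_on_def)
    also have "\<dots> = descent_transition_matrix f F L R $$ (i, j)"
      using ij l0 by (simp add: descent_transition_matrix_def)
    finally show "descent_transition_matrix f F L R $$ (i, j) = (A * B) $$ (i, j)" ..
  qed (use A B in \<open>simp_all add: descent_transition_matrix_def\<close>)
  show "descent_type_matrix S L R e N = B * A"
  proof (rule eq_matI)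
    fix l l' assume "l < dim_row (B * A)" "l' < dim_col (B * A)"
    then have ll': "l < N" "l' < N" using A B by auto
    have "(B * A) $$ (l, l') = (\<Sum>i<F. B $$ (l, i) * A $$ (i, l'))"
      using B A ll' by (rule index_mult_mat_sum)
    also have "\<dots> = (\<Sum>i<F. of_bool (L (f i) = e l \<and> e l' \<subseteq> R (f i)))"
      using ll' by (intro sum.cong refl) (auto simp: A_def B_def)
    also have "\<dots> = (\<Sum>x\<in>S. of_bool (L x = e l \<and> e l' \<subseteq> R x))"
      using sum.reindex_bij_betw[OF f] .
    also have "\<dots> = descent_type_matrix S L R e N $$ (l, l')"
      using ll' bij_betw_finite[OF f] by (simp add: index_descent_type_matrix Int_def)
    finally show "descent_type_matrix S L R e N $$ (l, l') = (B * A) $$ (l, l')" ..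
  qed (use A B in \<open>simp_all add: descent_type_matrix_def\<close>)
qed

lemma char_poly_descent_transition_matrix:
  assumes "bij_betw f {..<F} S" "inj_on e {..<N}" "L ` S \<subseteq> e ` {..<N}" "N \<le> F"
  shows "char_poly (descent_transition_matrix f F L R) =
    [:0, 1:] ^ (F - N) * char_poly (descent_type_matrix S L R e N)"
  unfolding descent_matrices_factorization[OF assms(1-3)]
  by (rule char_poly_mult_swap) (use assms(4) in auto)

lemma normal_seq_eq_descent_chain:
  "normal_seq n = descent_chain (simple_braids n) (D_L n) (D_R n)"
  by (simp add: fun_eq_iff normal_seq_def descent_chain_def successively_conv_nth)

lemma b_count_eq_card_descent_chains:
  "b_count n d y = card (descent_chains (simple_braids n) (D_L n) (D_R n) d y)"
  by (simp add: b_count_def descent_chains_def normal_seq_eq_descent_chain)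

lemma M'_mat_eq_descent_type_matrix:
  "M'_mat n e = descent_type_matrix (simple_braids n) (D_L n) (D_R n) e (2 ^ (n - 1))"
  by (simp add: M'_mat_def descent_type_matrix_def a_count_def)

lemma M_mat_eq_descent_transition_matrix:
  assumes "bij_betw f {..<fact n} (simple_braids n)"
  shows "M_mat n f = descent_transition_matrix f (fact n) (D_L n) (D_R n)"
  using bij_betwE[OF assms]
  by (intro eq_matI) (auto simp: M_mat_def descent_transition_matrix_def normal_seq_eq_descent_chain
      descent_chain_def)

theorem lemma2p12:
  fixes n :: nat and e :: "nat \<Rightarrow> nat set" and f :: "nat \<Rightarrow> nat list set"
  assumes "n \<ge> 1"
    and "bij_betw e {..<2 ^ (n - 1)} (Pow {1..<n})"
    and "bij_betw f {..<fact n} (simple_braids n)"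
  shows "(\<exists>k. char_poly (M_mat n f) = [:0, 1:] ^ k * char_poly (M'_mat n e))
    \<and> (\<forall>y \<in> simple_braids n. \<forall>d \<ge> 1. \<forall>j < 2 ^ (n - 1). e j = D_L n y \<longrightarrow>
          int (b_count n d y) = (\<Sum>i < 2 ^ (n - 1). (M'_mat n e ^\<^sub>m (d - 1)) $$ (i, j)))"
proof -
  have e_inj: "inj_on e {..<2 ^ (n - 1)}"
    using assms(2) by (rule bij_betw_imp_inj_on)
  have D_L_range: "D_L n ` simple_braids n \<subseteq> e ` {..<2 ^ (n - 1)}"
    using bij_betw_imp_surj_on[OF assms(2)] by (auto simp: D_L_def)
  have "finite (simple_braids n)"
    using bij_betw_finite[OF assms(3)] by simp
  have "char_poly (M_mat n f) = [:0, 1:] ^ (fact n - 2 ^ (n - 1)) * char_poly (M'_mat n e)"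
    unfolding M_mat_eq_descent_transition_matrix[OF assms(3)] M'_mat_eq_descent_type_matrix
    using assms(3) e_inj D_L_range two_power_pred_le_fact
    by (rule char_poly_descent_transition_matrix)
  moreover have "int (b_count n d y) = (\<Sum>i < 2 ^ (n - 1). (M'_mat n e ^\<^sub>m (d - 1)) $$ (i, j))"
    if "y \<in> simple_braids n" "d \<ge> 1" "j < 2 ^ (n - 1)" "e j = D_L n y" for y d j
  proof -
    obtain d' where "d = Suc d'"
      using \<open>d \<ge> 1\<close> by (cases d) auto
    then show ?thesis
      using card_descent_chains_eq_column_sum[OF \<open>finite (simple_braids n)\<close> e_inj D_L_range
          that(1,3,4), of "D_R n" d']
      by (simp add: b_count_eq_card_descent_chains M'_mat_eq_descent_type_matrix)
  qed
  ultimately show ?thesis by blast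
qed

end
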